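(* Let $\psi : [0,\infty) \to [0,\infty)$ be a measurable function such that $0 < 1/c_d := \int_0^\infty u^d \psi(u)\,{\rm d}u < \infty$ for all integers $d \ge 1$, and assume $\psi$ does not have compact support. For each $d \ge 1$, let $X_d$ be a random vector in $\mathbb{R}^{d+1}$ with density $x \mapsto c_d\,\psi(\|x\|)$, and let $U_d = \|X_d\|$. Assume there is $u_\ddagger$ such that on $[u_\ddagger, \infty)$ the function $\Lambda(u) := -\log \psi(u)$ is differentiable and $L(u) := u \Lambda'(u)$ is increasing; that $M(u) := L(u)/\log u \to \infty$ as $u \to \infty$; and that for every $\varepsilon \in (0,1)$, $\limsup_{u\to\infty} M((1-\varepsilon)u)/M(u) \le 1$ and $\liminf_{u\to\infty} M((1+\varepsilon)u)/M(u) \ge 1$. Let $u_d := L^{-1}(d)$. Assume further that $L$ is differentiable, that $\nu_d := u_d L'(u_d) \to \infty$ as $d\to\infty$, and that there is a sequence $\omega_d \to \infty$ such that $$\big|L(u_d) - L((1-\varepsilon)u_d) - \varepsilon u_d L'(u_d)\big| \le |\varepsilon|\,\nu_d/\omega_d \quad \text{whenever } \varepsilon^2 \le \omega_d/\nu_d.$$ Then for any sequence $\varepsilon_d > 0$ with $\varepsilon_d \sqrt{\nu_d} \to \infty$, $$\P\big(1 - \varepsilon_d \le U_d/u_d \le 1 + \varepsilon_d\big) \to 1 \quad \text{as } d \to \infty.$$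
   Context: $L^{-1}$ denotes the inverse of the increasing function $L$ on $[u_\ddagger,\infty)$, so $L(u_d)=d$ for $d$ large. The condition "$\varepsilon_d \gg 1/\sqrt{\nu_d}$" in the paper means $\varepsilon_d\sqrt{\nu_d}\to\infty$. *)

theory Defs
  imports "HOL-Probability.Probability"
begin

text \<open>Euclidean norm on R^(d+1), with vectors represented as functions
  nat => real on the index set {..d} (i.e. {0..d}, d+1 coordinates).\<close>
definition enorm :: "nat \<Rightarrow> (nat \<Rightarrow> real) \<Rightarrow> real" where
  "enorm d x = sqrt (\<Sum>i\<le>d. (x i)\<^sup>2)"

abbreviation lebesgue_R :: "nat \<Rightarrow> (nat \<Rightarrow> real) measure" where
  "lebesgue_R d \<equiv> PiM {..d} (\<lambda>_. lborel)"

end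

theory Submission
  imports Defs
begin

text \<open>
  In polar coordinates \<open>\<parallel>X\<^sub>d\<parallel>\<close> has density proportional to \<open>r\<^sup>d \<psi>(r) = exp (d log r - \<Lambda>(r))\<close>,
  whose logarithmic derivative \<open>(d - L(r)) / r\<close> changes sign at \<open>u\<^sub>d\<close>. The linearisation
  hypothesis gives \<open>\<bar>L((1 \<plusminus> \<delta>) u\<^sub>d) - d\<bar> \<ge> \<delta> \<nu>\<^sub>d / 2\<close> for
  \<open>\<delta> = \<delta>\<^sub>d = min \<epsilon>\<^sub>d (min (\<surd>(\<omega>\<^sub>d / \<nu>\<^sub>d)) (1/2))\<close>, and since \<open>L\<close> is monotone the density is
  dominated beyond \<open>(1 \<plusminus> \<delta>) u\<^sub>d\<close> by power laws with exponent of size \<open>\<delta> \<nu>\<^sub>d\<close>. Integrating them bounds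
  both tails by \<open>O(1 / (\<delta>\<^sup>2 \<nu>\<^sub>d))\<close> times the mass of \<open>[(1 - \<delta>) u\<^sub>d, (1 + \<delta>) u\<^sub>d]\<close>, and the mass
  below a fixed level \<open>v\<close> is \<open>O(2\<^sup>-\<^sup>d)\<close> times the mass of \<open>[2 v, 3 v]\<close>. As \<open>\<delta>\<^sub>d\<^sup>2 \<nu>\<^sub>d \<rightarrow> \<infinity>\<close> and
  \<open>\<delta>\<^sub>d \<le> \<epsilon>\<^sub>d\<close>, the probability of the window tends to \<open>1\<close>.
\<close>

section \<open>Polar coordinates\<close>

lemma enorm_nonneg: "0 \<le> enorm d x"
  unfolding enorm_def by (simp add: sum_nonneg)

lemma enorm_measurable [measurable]: "enorm d \<in> borel_measurable (lebesgue_R d)"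
  unfolding enorm_def by measurable

definition scale_coords :: "nat \<Rightarrow> real \<Rightarrow> (nat \<Rightarrow> real) \<Rightarrow> (nat \<Rightarrow> real)" where
  "scale_coords d t x = (\<lambda>i\<in>{..d}. t * x i)"

lemma scale_coords_measurable [measurable]: "scale_coords d t \<in> lebesgue_R d \<rightarrow>\<^sub>M lebesgue_R d"
  unfolding scale_coords_def by measurable

lemma enorm_scale_coords:
  assumes "0 < t"
  shows "enorm d (scale_coords d t x) = t * enorm d x"
proof -
  have "(\<Sum>i\<le>d. (scale_coords d t x i)\<^sup>2) = t\<^sup>2 * (\<Sum>i\<le>d. (x i)\<^sup>2)"
    by (simp add: scale_coords_def sum_distrib_left power_mult_distrib)
  then show ?thesis
    using assms by (simp add: enorm_def real_sqrt_mult)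
qed

lemma emeasure_lborel_scale_preimage:
  assumes "0 < t" "A \<in> sets borel"
  shows "emeasure lborel {y::real. t * y \<in> A} = ennreal (inverse t) * emeasure lborel A"
proof -
  have "emeasure lborel {y::real. t * y \<in> A} = emeasure (distr lborel borel ((*) t)) A"
    using assms by (subst emeasure_distr) (auto simp: vimage_def)
  also have "\<dots> = ennreal (inverse t) * emeasure lborel A"
    using assms by (simp add: lborel_distr_mult emeasure_density_const)
  finally show ?thesis .
qed

lemma density_distr_scale_coords:
  assumes t: "0 < t"
  shows "density (distr (lebesgue_R d) (lebesgue_R d) (scale_coords d t)) (\<lambda>_. ennreal (t ^ Suc d))
           = lebesgue_R d"
proof -
  interpret product_sigma_finite "\<lambda>_::nat. lborel :: real measure"
    by (simp add: product_sigma_finite.intro lborel.sigma_finite_measure_axioms)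
  have "ennreal (t ^ Suc d) * ennreal (inverse t) ^ Suc d = ennreal (t ^ Suc d * inverse t ^ Suc d)"
    using t by (simp add: ennreal_power ennreal_mult'')
  also have "t ^ Suc d * inverse t ^ Suc d = 1"
    using t by (metis power_mult_distrib right_inverse power_one less_irrefl)
  finally have cancel: "ennreal (t ^ Suc d) * ennreal (inverse t) ^ Suc d = 1"
    by simp
  show ?thesis
  proof (rule PiM_eqI)
    fix A :: "nat \<Rightarrow> real set"
    assume A: "\<And>i. i \<in> {..d} \<Longrightarrow> A i \<in> sets lborel"
    have preimage: "scale_coords d t -` Pi\<^sub>E {..d} A \<inter> space (lebesgue_R d)
                      = Pi\<^sub>E {..d} (\<lambda>i. {y. t * y \<in> A i})"
      by (auto simp: scale_coords_def space_PiM PiE_iff)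
    have "emeasure (density (distr (lebesgue_R d) (lebesgue_R d) (scale_coords d t))
                      (\<lambda>_. ennreal (t ^ Suc d))) (Pi\<^sub>E {..d} A)
        = ennreal (t ^ Suc d) * emeasure (lebesgue_R d) (Pi\<^sub>E {..d} (\<lambda>i. {y. t * y \<in> A i}))"
      using A by (simp add: emeasure_density_const emeasure_distr preimage)
    also have "\<dots> = ennreal (t ^ Suc d) * (\<Prod>i\<in>{..d}. ennreal (inverse t) * emeasure lborel (A i))"
      using A t by (subst emeasure_PiM) (auto simp: emeasure_lborel_scale_preimage)
    also have "\<dots> = ennreal (t ^ Suc d) * ennreal (inverse t) ^ Suc d * (\<Prod>i\<in>{..d}. emeasure lborel (A i))"
      by (simp add: prod.distrib mult.assoc del: power_Suc)
    also have "\<dots> = (\<Prod>i\<in>{..d}. emeasure lborel (A i))"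
      by (simp only: cancel mult_1)
    finally show "emeasure (density (distr (lebesgue_R d) (lebesgue_R d) (scale_coords d t))
                    (\<lambda>_. ennreal (t ^ Suc d))) (Pi\<^sub>E {..d} A) = (\<Prod>i\<in>{..d}. emeasure lborel (A i))" .
  qed auto
qed

definition enorm_ball :: "nat \<Rightarrow> real \<Rightarrow> (nat \<Rightarrow> real) set" where
  "enorm_ball d t = {x \<in> space (lebesgue_R d). enorm d x < t}"

lemma enorm_ball_sets [measurable]: "enorm_ball d t \<in> sets (lebesgue_R d)"
  unfolding enorm_ball_def by measurable

lemma emeasure_enorm_ball_scale:
  assumes t: "0 < t"
  shows "emeasure (lebesgue_R d) (enorm_ball d t) = ennreal (t ^ Suc d) * emeasure (lebesgue_R d) (enorm_ball d 1)"
proof -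
  have "scale_coords d t -` enorm_ball d t \<inter> space (lebesgue_R d) = enorm_ball d 1"
    using t by (auto simp: enorm_ball_def enorm_scale_coords) (auto simp: scale_coords_def space_PiM PiE_iff)
  then show ?thesis
    by (subst density_distr_scale_coords[OF t, of d, symmetric])
       (simp add: emeasure_density_const emeasure_distr)
qed

lemma emeasure_enorm_ball_1_finite: "emeasure (lebesgue_R d) (enorm_ball d 1) < \<infinity>"
proof -
  interpret product_sigma_finite "\<lambda>_::nat. lborel :: real measure"
    by (simp add: product_sigma_finite.intro lborel.sigma_finite_measure_axioms)
  have "enorm_ball d 1 \<subseteq> Pi\<^sub>E {..d} (\<lambda>_. {-1..1})"
  proof
    fix x assume x: "x \<in> enorm_ball d 1"
    have "\<bar>x i\<bar> \<le> 1" if "i \<le> d" for i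
    proof -
      have "(x i)\<^sup>2 \<le> (\<Sum>j\<le>d. (x j)\<^sup>2)"
        using that by (intro member_le_sum) auto
      then have "\<bar>x i\<bar> \<le> enorm d x"
        unfolding enorm_def using real_sqrt_le_mono by fastforce
      then show ?thesis
        using x by (auto simp: enorm_ball_def)
    qed
    then show "x \<in> Pi\<^sub>E {..d} (\<lambda>_. {-1..1})"
      using x by (auto simp: enorm_ball_def space_PiM PiE_iff abs_le_iff)
  qed
  then have "emeasure (lebesgue_R d) (enorm_ball d 1) \<le> emeasure (lebesgue_R d) (Pi\<^sub>E {..d} (\<lambda>_. {-1..1}))"
    by (intro emeasure_mono) auto
  also have "\<dots> = (\<Prod>i\<in>{..d}. emeasure lborel {-1..(1::real)})"
    by (subst emeasure_PiM) auto
  also have "\<dots> < \<infinity>"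
    by (simp add: ennreal_mult_less_top power_less_top_ennreal)
  finally show ?thesis .
qed

definition unit_ball_volume :: "nat \<Rightarrow> real" where
  "unit_ball_volume d = enn2real (emeasure (lebesgue_R d) (enorm_ball d 1))"

lemma unit_ball_volume_nonneg: "0 \<le> unit_ball_volume d"
  by (simp add: unit_ball_volume_def)

lemma emeasure_enorm_ball:
  "emeasure (lebesgue_R d) (enorm_ball d t) = ennreal (unit_ball_volume d * t ^ Suc d) * indicator {0<..} t"
proof (cases "0 < t")
  case True
  have "emeasure (lebesgue_R d) (enorm_ball d 1) = ennreal (unit_ball_volume d)"
    using emeasure_enorm_ball_1_finite[of d] by (simp add: unit_ball_volume_def less_top)
  then have "emeasure (lebesgue_R d) (enorm_ball d t) = ennreal (t ^ Suc d) * ennreal (unit_ball_volume d)"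
    using emeasure_enorm_ball_scale[OF True, of d] by simp
  also have "\<dots> = ennreal (unit_ball_volume d * t ^ Suc d)"
    using True by (simp add: ennreal_mult mult.commute unit_ball_volume_nonneg)
  finally show ?thesis
    using True by simp
next
  case False
  then have "enorm_ball d t = {}"
    using enorm_nonneg[of d] by (auto simp: enorm_ball_def not_less intro: order.trans)
  with False show ?thesis
    by simp
qed

lemma emeasure_power_density_lessThan:
  fixes V t :: real
  assumes V: "0 \<le> V"
  shows "emeasure (density lborel (\<lambda>r. ennreal (real (Suc d) * V * r ^ d) * indicator {0..} r)) {..<t}
           = ennreal (V * t ^ Suc d) * indicator {0<..} t"
proof (cases "0 < t")
  case True
  have "emeasure (density lborel (\<lambda>r. ennreal (real (Suc d) * V * r ^ d) * indicator {0..} r)) {..<t}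
      = (\<integral>\<^sup>+r. ennreal (real (Suc d) * V * r ^ d) * indicator {0..t} r \<partial>lborel)"
    by (subst emeasure_density, simp, simp, rule nn_integral_cong_AE)
       (use AE_lborel_singleton[of t] in \<open>auto split: split_indicator\<close>)
  also have "\<dots> = ennreal (V * t ^ Suc d - V * 0 ^ Suc d)"
  proof (rule nn_integral_FTC_Icc)
    fix r :: real
    have "((\<lambda>r. V * r ^ Suc d) has_real_derivative V * (real (Suc d) * r ^ (Suc d - Suc 0))) (at r)"
      by (intro DERIV_cmult DERIV_pow)
    then show "((\<lambda>r. V * r ^ Suc d) has_real_derivative real (Suc d) * V * r ^ d) (at r)"
      by (simp add: ac_simps)
  qed (use True V in auto)
  finally show ?thesis
    using True by simp
next
  case False
  have "emeasure (density lborel (\<lambda>r. ennreal (real (Suc d) * V * r ^ d) * indicator {0..} r)) {..<t}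
      = (\<integral>\<^sup>+r. ennreal (real (Suc d) * V * r ^ d) * indicator {0..} r * indicator {..<t} r \<partial>lborel)"
    by (subst emeasure_density) auto
  also have "\<dots> = (\<integral>\<^sup>+(r::real). 0 \<partial>lborel)"
    by (rule nn_integral_cong) (use False in \<open>auto split: split_indicator\<close>)
  finally show ?thesis
    using False by simp
qed

lemma emeasure_distr_enorm_lessThan:
  "emeasure (distr (lebesgue_R d) borel (enorm d)) {..<t} = ennreal (unit_ball_volume d * t ^ Suc d) * indicator {0<..} t"
proof -
  have "enorm d -` {..<t} \<inter> space (lebesgue_R d) = enorm_ball d t"
    by (auto simp: enorm_ball_def)
  then show ?thesis
    by (simp add: emeasure_distr emeasure_enorm_ball)
qed

text \<open>Both measures are determined by the half-lines \<open>(-\<infinity>, t)\<close>, whose preimages under the norm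
  are the balls of radius \<open>t\<close>.\<close>
lemma distr_enorm_lebesgue_R:
  "distr (lebesgue_R d) borel (enorm d) =
     density lborel (\<lambda>r. ennreal (real (Suc d) * unit_ball_volume d * r ^ d) * indicator {0..} r)"
proof (rule measure_eqI_generator_eq[where E="range lessThan" and \<Omega>=UNIV and A="\<lambda>i. {..<real i}"])
  show "Int_stable (range lessThan :: real set set)"
    by (auto simp: Int_stable_def) (metis greaterThan_Int_greaterThan rangeI)
  have "sets (borel :: real measure) = sigma_sets UNIV (range lessThan)"
    by (subst borel_Iio) (simp add: sets_measure_of)
  then show "sets (distr (lebesgue_R d) borel (enorm d)) = sigma_sets UNIV (range lessThan)"
    "sets (density lborel (\<lambda>r. ennreal (real (Suc d) * unit_ball_volume d * r ^ d) * indicator {0..} r))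
       = sigma_sets UNIV (range lessThan)"
    by simp_all
  show "range lessThan \<subseteq> Pow (UNIV :: real set)" "range (\<lambda>i. {..<real i}) \<subseteq> range lessThan"
    by auto
  show "(\<Union>i. {..<real i}) = UNIV"
    by (auto intro: reals_Archimedean2)
  show "emeasure (distr (lebesgue_R d) borel (enorm d)) {..<real i} \<noteq> \<infinity>" for i
    by (simp add: emeasure_distr_enorm_lessThan split: split_indicator)
  fix X assume "X \<in> range (lessThan :: real \<Rightarrow> real set)"
  then obtain t where "X = {..<t}"
    by auto
  then show "emeasure (distr (lebesgue_R d) borel (enorm d)) X
      = emeasure (density lborel (\<lambda>r. ennreal (real (Suc d) * unit_ball_volume d * r ^ d) * indicator {0..} r)) X"
    by (simp only: emeasure_distr_enorm_lessThan emeasure_power_density_lessThan[OF unit_ball_volume_nonneg])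
qed

lemma nn_integral_enorm:
  assumes [measurable]: "g \<in> borel_measurable borel"
  shows "(\<integral>\<^sup>+x. g (enorm d x) \<partial>lebesgue_R d) =
     (\<integral>\<^sup>+r. ennreal (real (Suc d) * unit_ball_volume d * r ^ d) * indicator {0..} r * g r \<partial>lborel)"
proof -
  have "(\<integral>\<^sup>+x. g (enorm d x) \<partial>lebesgue_R d) = (\<integral>\<^sup>+r. g r \<partial>distr (lebesgue_R d) borel (enorm d))"
    by (simp add: nn_integral_distr)
  then show ?thesis
    by (simp add: distr_enorm_lebesgue_R nn_integral_density)
qed

section \<open>Radial moments\<close>

definition radial_moment :: "(real \<Rightarrow> real) \<Rightarrow> nat \<Rightarrow> real set \<Rightarrow> ennreal" where
  "radial_moment \<psi> d S = (\<integral>\<^sup>+r\<in>S. ennreal (r ^ d * \<psi> r) \<partial>lborel)"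

locale radial_profile =
  fixes \<psi> :: "real \<Rightarrow> real"
  assumes profile_measurable [measurable]: "\<psi> \<in> borel_measurable borel"
    and profile_nonneg: "0 \<le> \<psi> r"
    and profile_vanishes_neg: "r < 0 \<Longrightarrow> \<psi> r = 0"
begin

lemma emeasure_enorm_in:
  assumes Y: "distributed N (lebesgue_R d) Y (\<lambda>x. ennreal (c * \<psi> (enorm d x)))"
    and S [measurable]: "S \<in> sets borel"
  shows "emeasure N {w\<in>space N. enorm d (Y w) \<in> S}
           = ennreal c * ennreal (real (Suc d) * unit_ball_volume d) * radial_moment \<psi> d S"
proof -
  have [measurable]: "Y \<in> N \<rightarrow>\<^sub>M lebesgue_R d"
    and law: "distr N (lebesgue_R d) Y = density (lebesgue_R d) (\<lambda>x. ennreal (c * \<psi> (enorm d x)))"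
    using Y by (simp_all add: distributed_def)
  have density_split: "ennreal (real (Suc d) * unit_ball_volume d * r ^ d) * indicator {0..} r
        * (ennreal (c * \<psi> r) * indicator S r)
      = ennreal c * ennreal (real (Suc d) * unit_ball_volume d) * (ennreal (r ^ d * \<psi> r) * indicator S r)"
    for r :: real
  proof (cases "0 \<le> r")
    case True
    then show ?thesis
      using unit_ball_volume_nonneg[of d] profile_nonneg[of r]
      by (simp add: ennreal_mult ennreal_mult'' ac_simps)
  qed (simp add: profile_vanishes_neg)
  define B where "B = {x\<in>space (lebesgue_R d). enorm d x \<in> S}"
  have [measurable]: "B \<in> sets (lebesgue_R d)"
    unfolding B_def by measurable
  have "{w\<in>space N. enorm d (Y w) \<in> S} = Y -` B \<inter> space N"
    using measurable_space[of Y N "lebesgue_R d"] by (auto simp: B_def)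
  then have "emeasure N {w\<in>space N. enorm d (Y w) \<in> S} = emeasure (distr N (lebesgue_R d) Y) B"
    by (simp add: emeasure_distr)
  also have "\<dots> = (\<integral>\<^sup>+x. ennreal (c * \<psi> (enorm d x)) * indicator B x \<partial>lebesgue_R d)"
    using Y unfolding law by (simp add: emeasure_density distributed_def)
  also have "\<dots> = (\<integral>\<^sup>+x. (\<lambda>r. ennreal (c * \<psi> r) * indicator S r) (enorm d x) \<partial>lebesgue_R d)"
    by (intro nn_integral_cong) (auto simp: B_def split: split_indicator)
  also have "\<dots> = (\<integral>\<^sup>+r. ennreal (real (Suc d) * unit_ball_volume d * r ^ d) * indicator {0..} r
                       * (ennreal (c * \<psi> r) * indicator S r) \<partial>lborel)"
    by (rule nn_integral_enorm) measurable
  also have "\<dots> = (\<integral>\<^sup>+r. ennreal c * ennreal (real (Suc d) * unit_ball_volume d)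
                       * (ennreal (r ^ d * \<psi> r) * indicator S r) \<partial>lborel)"
    by (simp only: density_split)
  also have "\<dots> = ennreal c * ennreal (real (Suc d) * unit_ball_volume d) * radial_moment \<psi> d S"
    unfolding radial_moment_def power_one_right by (rule nn_integral_cmult) measurable
  finally show ?thesis .
qed

lemma measure_enorm_in:
  assumes "prob_space N"
    and Y: "distributed N (lebesgue_R d) Y (\<lambda>x. ennreal (c * \<psi> (enorm d x)))"
    and S: "S \<in> sets borel"
  shows "measure N {w\<in>space N. enorm d (Y w) \<in> S}
           = enn2real (radial_moment \<psi> d S) / enn2real (radial_moment \<psi> d UNIV)"
proof -
  interpret prob_space N by fact
  define \<kappa> where "\<kappa> = ennreal c * ennreal (real (Suc d) * unit_ball_volume d)"
  have "1 = emeasure N {w\<in>space N. enorm d (Y w) \<in> UNIV}"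
    by (simp add: emeasure_space_1)
  also have "\<dots> = \<kappa> * radial_moment \<psi> d UNIV"
    unfolding \<kappa>_def by (rule emeasure_enorm_in[OF Y]) simp
  finally have "enn2real \<kappa> * enn2real (radial_moment \<psi> d UNIV) = 1"
    by (metis enn2real_1 enn2real_mult)
  moreover have "measure N {w\<in>space N. enorm d (Y w) \<in> S} = enn2real \<kappa> * enn2real (radial_moment \<psi> d S)"
    unfolding measure_def \<kappa>_def by (simp add: emeasure_enorm_in[OF Y S] enn2real_mult)
  ultimately show ?thesis
    by (auto simp: eq_divide_eq mult.commute)
qed

lemma measure_relative_norm_deviation:
  assumes N: "prob_space N" and Y: "distributed N (lebesgue_R d) Y (\<lambda>x. ennreal (c * \<psi> (enorm d x)))"
    and u: "0 < u"
  shows "measure N {w \<in> space N. 1 - \<epsilon> \<le> enorm d (Y w) / u \<and> enorm d (Y w) / u \<le> 1 + \<epsilon>}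
           = enn2real (radial_moment \<psi> d {(1 - \<epsilon>) * u..(1 + \<epsilon>) * u}) / enn2real (radial_moment \<psi> d UNIV)"
proof -
  have "{w \<in> space N. 1 - \<epsilon> \<le> enorm d (Y w) / u \<and> enorm d (Y w) / u \<le> 1 + \<epsilon>}
      = {w \<in> space N. enorm d (Y w) \<in> {(1 - \<epsilon>) * u..(1 + \<epsilon>) * u}}"
    using u by (auto simp: field_simps)
  then show ?thesis
    using measure_enorm_in[OF N Y, of "{(1 - \<epsilon>) * u..(1 + \<epsilon>) * u}"] by simp
qed

lemma radial_moment_Un:
  assumes "S \<in> sets borel" "T \<in> sets borel" "S \<inter> T = {}"
  shows "radial_moment \<psi> d (S \<union> T) = radial_moment \<psi> d S + radial_moment \<psi> d T"
  unfolding radial_moment_def using assms by (intro nn_integral_disjoint_pair) auto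

lemma radial_moment_mono: "S \<subseteq> T \<Longrightarrow> radial_moment \<psi> d S \<le> radial_moment \<psi> d T"
  unfolding radial_moment_def by (rule nn_set_integral_set_mono)

lemma radial_moment_le_first_moment:
  assumes "1 \<le> d" "S \<subseteq> {..v}" and [measurable]: "S \<in> sets borel"
  shows "radial_moment \<psi> d S \<le> ennreal (v ^ (d - 1)) * radial_moment \<psi> 1 S"
proof -
  have "ennreal (r ^ d * \<psi> r) * indicator S r \<le> ennreal (v ^ (d - 1)) * (ennreal (r * \<psi> r) * indicator S r)"
    for r :: real
  proof (cases "0 \<le> r \<and> r \<in> S")
    case True
    have nonneg: "0 \<le> r * \<psi> r" "0 \<le> v ^ (d - 1)"
      using True assms profile_nonneg[of r] by auto
    have "r ^ d * \<psi> r = r ^ (d - 1) * (r * \<psi> r)"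
      using assms power_minus_mult[of d r] by simp
    also have "\<dots> \<le> v ^ (d - 1) * (r * \<psi> r)"
      using True assms nonneg by (intro mult_right_mono power_mono) auto
    finally show ?thesis
      using True nonneg by (simp add: ennreal_mult[symmetric] ennreal_leI)
  qed (auto simp: profile_vanishes_neg)
  then have "radial_moment \<psi> d S \<le> (\<integral>\<^sup>+r. ennreal (v ^ (d - 1)) * (ennreal (r * \<psi> r) * indicator S r) \<partial>lborel)"
    unfolding radial_moment_def by (intro nn_integral_mono)
  also have "\<dots> = ennreal (v ^ (d - 1)) * radial_moment \<psi> 1 S"
    unfolding radial_moment_def power_one_right by (rule nn_integral_cmult) measurable
  finally show ?thesis .
qed

lemma radial_moment_ge_first_moment:
  assumes "1 \<le> d" "0 \<le> w" "S \<subseteq> {w..}" and [measurable]: "S \<in> sets borel"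
  shows "ennreal (w ^ (d - 1)) * radial_moment \<psi> 1 S \<le> radial_moment \<psi> d S"
proof -
  have "ennreal (w ^ (d - 1)) * (ennreal (r * \<psi> r) * indicator S r) \<le> ennreal (r ^ d * \<psi> r) * indicator S r"
    for r :: real
  proof (cases "r \<in> S")
    case True
    have nonneg: "0 \<le> r * \<psi> r" "0 \<le> w ^ (d - 1)"
      using True assms profile_nonneg[of r] by auto
    have "w ^ (d - 1) * (r * \<psi> r) \<le> r ^ (d - 1) * (r * \<psi> r)"
      using True assms nonneg by (intro mult_right_mono power_mono) auto
    also have "\<dots> = r ^ d * \<psi> r"
      using assms power_minus_mult[of d r] by simp
    finally show ?thesis
      using True nonneg by (simp add: ennreal_mult[symmetric] ennreal_leI)
  qed auto
  then have "(\<integral>\<^sup>+r. ennreal (w ^ (d - 1)) * (ennreal (r * \<psi> r) * indicator S r) \<partial>lborel) \<le> radial_moment \<psi> d S"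
    unfolding radial_moment_def by (intro nn_integral_mono)
  moreover have "(\<integral>\<^sup>+r. ennreal (w ^ (d - 1)) * (ennreal (r * \<psi> r) * indicator S r) \<partial>lborel)
      = ennreal (w ^ (d - 1)) * radial_moment \<psi> 1 S"
    unfolding radial_moment_def power_one_right by (rule nn_integral_cmult) measurable
  ultimately show ?thesis
    by simp
qed

lemma radial_moment_split4:
  assumes "v \<le> a" "a \<le> b"
  shows "radial_moment \<psi> d UNIV
           = radial_moment \<psi> d {..<v} + radial_moment \<psi> d {v..<a} + radial_moment \<psi> d {a..b}
             + radial_moment \<psi> d {b<..}"
proof -
  have "UNIV = (({..<v} \<union> {v..<a}) \<union> {a..b}) \<union> {b<..}"
    using assms by auto
  then have "radial_moment \<psi> d UNIV = radial_moment \<psi> d ((({..<v} \<union> {v..<a}) \<union> {a..b}) \<union> {b<..})"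
    by (rule arg_cong)
  also have "\<dots> = radial_moment \<psi> d (({..<v} \<union> {v..<a}) \<union> {a..b}) + radial_moment \<psi> d {b<..}"
    using assms by (intro radial_moment_Un) auto
  also have "radial_moment \<psi> d (({..<v} \<union> {v..<a}) \<union> {a..b})
      = radial_moment \<psi> d ({..<v} \<union> {v..<a}) + radial_moment \<psi> d {a..b}"
    using assms by (intro radial_moment_Un) auto
  also have "radial_moment \<psi> d ({..<v} \<union> {v..<a}) = radial_moment \<psi> d {..<v} + radial_moment \<psi> d {v..<a}"
    using assms by (intro radial_moment_Un) auto
  finally show ?thesis .
qed

end

section \<open>Comparison with power laws\<close>

lemma nn_integral_ge_const_interval:
  fixes f :: "real \<Rightarrow> real"
  assumes "x \<le> y" "0 \<le> c" "{x..y} \<subseteq> S" "\<And>r. x \<le> r \<Longrightarrow> r \<le> y \<Longrightarrow> c \<le> f r"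
  shows "ennreal (c * (y - x)) \<le> (\<integral>\<^sup>+r\<in>S. ennreal (f r) \<partial>lborel)"
proof -
  have "ennreal (c * (y - x)) = (\<integral>\<^sup>+r. ennreal c * indicator {x..y} r \<partial>lborel)"
    using assms by (simp add: nn_integral_cmult_indicator ennreal_mult)
  also have "\<dots> \<le> (\<integral>\<^sup>+r\<in>S. ennreal (f r) \<partial>lborel)"
    using assms by (intro nn_integral_mono) (auto split: split_indicator intro!: ennreal_leI)
  finally show ?thesis .
qed

lemma nn_integral_powr_growth_le:
  fixes f :: "real \<Rightarrow> real"
  assumes v: "0 < v" "v \<le> a" and k: "0 < k" and fa: "0 \<le> f a"
    and growth: "\<And>r. v \<le> r \<Longrightarrow> r \<le> a \<Longrightarrow> f r \<le> f a * r powr k / a powr k"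
  shows "(\<integral>\<^sup>+r\<in>{v..<a}. ennreal (f r) \<partial>lborel) \<le> ennreal (f a * a / k)"
proof -
  define C where "C = f a / a powr k"
  have C: "0 \<le> C"
    using fa by (simp add: C_def)
  define H where "H r = C / (k + 1) * r powr (k + 1)" for r
  have "(\<integral>\<^sup>+r\<in>{v..<a}. ennreal (f r) \<partial>lborel) \<le> (\<integral>\<^sup>+r\<in>{v..a}. ennreal (C * r powr k) \<partial>lborel)"
    using growth by (intro nn_integral_mono) (auto split: split_indicator simp: C_def intro!: ennreal_leI)
  also have "\<dots> = ennreal (H a - H v)"
  proof (rule nn_integral_FTC_Icc)
    fix r assume "r \<in> {v..a}"
    then have "0 < r"
      using v by auto
    then have "(H has_real_derivative C / (k + 1) * ((k + 1) * r powr (k + 1 - 1))) (at r)"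
      unfolding H_def by (intro DERIV_cmult has_real_derivative_powr)
    then show "(H has_real_derivative C * r powr k) (at r)"
      using k by simp
  qed (use v C in auto)
  also have "\<dots> \<le> ennreal (H a)"
    using v C k by (intro ennreal_leI) (simp add: H_def)
  also have "H a = f a * a / (k + 1)"
    using v k by (simp add: H_def C_def powr_add)
  also have "ennreal (f a * a / (k + 1)) \<le> ennreal (f a * a / k)"
    using v k fa by (intro ennreal_leI divide_left_mono) auto
  finally show ?thesis .
qed

lemma nn_integral_powr_decay_le:
  fixes f :: "real \<Rightarrow> real"
  assumes b: "0 < b" and k: "1 < k" and fb: "0 \<le> f b"
    and decay: "\<And>r. b \<le> r \<Longrightarrow> f r \<le> f b * b powr k / r powr k"
  shows "(\<integral>\<^sup>+r\<in>{b<..}. ennreal (f r) \<partial>lborel) \<le> ennreal (f b * b / (k - 1))"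
proof -
  define C where "C = f b * b powr k"
  have C: "0 \<le> C"
    using fb by (simp add: C_def)
  define H where "H r = C / (1 - k) * r powr (1 - k)" for r
  have "(\<integral>\<^sup>+r\<in>{b<..}. ennreal (f r) \<partial>lborel) \<le> (\<integral>\<^sup>+r\<in>{b..}. ennreal (C * r powr (- k)) \<partial>lborel)"
    using decay by (intro nn_integral_mono)
      (auto split: split_indicator simp: C_def powr_minus_divide intro!: ennreal_leI)
  also have "\<dots> = ennreal (0 - H b)"
  proof (rule nn_integral_FTC_atLeast)
    fix r assume "b \<le> r"
    then have "0 < r"
      using b by auto
    then have "(H has_real_derivative C / (1 - k) * ((1 - k) * r powr (1 - k - 1))) (at r)"
      unfolding H_def by (intro DERIV_cmult has_real_derivative_powr)
    then show "(H has_real_derivative C * r powr (- k)) (at r)"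
      using k by simp
    show "0 \<le> C * r powr (- k)"
      using C by simp
  next
    have "((\<lambda>r. r powr (1 - k)) \<longlongrightarrow> 0) at_top"
      using k by (intro tendsto_neg_powr filterlim_ident) auto
    then show "(H \<longlongrightarrow> 0) at_top"
      unfolding H_def by (rule tendsto_mult_right_zero)
  qed simp
  also have "0 - H b = f b * b / (k - 1)"
    using b k by (simp add: H_def C_def powr_diff field_simps)
  finally show ?thesis .
qed

lemma exp_log_weighted_density:
  assumes "0 < r" "0 < \<psi> r"
  shows "exp (real d * ln r + ln (\<psi> r) - k * ln r) = r ^ d * \<psi> r / r powr k"
proof -
  have "exp (real d * ln r) = r ^ d"
    using assms by (simp add: exp_of_nat_mult)
  moreover have "exp (k * ln r) = r powr k"
    using assms by (simp add: powr_def mult.commute)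
  ultimately show ?thesis
    using assms by (simp add: exp_diff exp_add)
qed

lemma log_weighted_density_has_derivative:
  assumes "0 < r" and deriv: "((\<lambda>s. - ln (\<psi> s)) has_real_derivative \<Lambda>'r) (at r)"
  shows "((\<lambda>s. real d * ln s + ln (\<psi> s) - k * ln s) has_real_derivative (real d - r * \<Lambda>'r - k) / r) (at r)"
proof -
  have "((\<lambda>s. real d * ln s - - ln (\<psi> s) - k * ln s) has_real_derivative real d * (1 / r) - \<Lambda>'r - k * (1 / r)) (at r)"
    using assms by (intro DERIV_diff deriv DERIV_cmult DERIV_ln_divide)
  moreover have "real d * (1 / r) - \<Lambda>'r - k * (1 / r) = (real d - r * \<Lambda>'r - k) / r"
    using assms by (simp add: field_simps)
  ultimately show ?thesis
    by simp
qed

text \<open>The exponent \<open>d - k\<close> in \<open>r\<^sup>d \<psi>(r) / r\<^sup>k\<close> competes with the local decay rate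
  \<open>r \<Lambda>'(r)\<close> of \<open>\<psi> = exp (- \<Lambda>)\<close>; on a range where one dominates, the weighted density is monotone.\<close>
lemma weighted_density_mono:
  fixes \<psi> \<Lambda>' :: "real \<Rightarrow> real"
  assumes deriv: "\<And>r. x \<le> r \<Longrightarrow> r \<le> y \<Longrightarrow> ((\<lambda>s. - ln (\<psi> s)) has_real_derivative \<Lambda>' r) (at r)"
    and pos: "0 < \<psi> x" "0 < \<psi> y" and xy: "0 < x" "x \<le> y"
    and slope: "\<And>r. x \<le> r \<Longrightarrow> r \<le> y \<Longrightarrow> r * \<Lambda>' r + k \<le> real d"
  shows "x ^ d * \<psi> x / x powr k \<le> y ^ d * \<psi> y / y powr k"
proof -
  have "real d * ln x + ln (\<psi> x) - k * ln x \<le> real d * ln y + ln (\<psi> y) - k * ln y"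
  proof (rule DERIV_nonneg_imp_nondecreasing[OF xy(2)])
    fix r assume r: "x \<le> r" "r \<le> y"
    then show "\<exists>D. ((\<lambda>s. real d * ln s + ln (\<psi> s) - k * ln s) has_real_derivative D) (at r) \<and> 0 \<le> D"
      using xy slope[OF r]
      by (intro exI[of _ "(real d - r * \<Lambda>' r - k) / r"] conjI log_weighted_density_has_derivative deriv)
        auto
  qed
  then show ?thesis
    using xy pos by (simp add: exp_log_weighted_density[symmetric])
qed

lemma weighted_density_antimono:
  fixes \<psi> \<Lambda>' :: "real \<Rightarrow> real"
  assumes deriv: "\<And>r. x \<le> r \<Longrightarrow> r \<le> y \<Longrightarrow> ((\<lambda>s. - ln (\<psi> s)) has_real_derivative \<Lambda>' r) (at r)"
    and pos: "0 < \<psi> x" "0 < \<psi> y" and xy: "0 < x" "x \<le> y"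
    and slope: "\<And>r. x \<le> r \<Longrightarrow> r \<le> y \<Longrightarrow> real d \<le> r * \<Lambda>' r + k"
  shows "y ^ d * \<psi> y / y powr k \<le> x ^ d * \<psi> x / x powr k"
proof -
  have "real d * ln y + ln (\<psi> y) - k * ln y \<le> real d * ln x + ln (\<psi> x) - k * ln x"
  proof (rule DERIV_nonpos_imp_nonincreasing[OF xy(2)])
    fix r assume r: "x \<le> r" "r \<le> y"
    then show "\<exists>D. ((\<lambda>s. real d * ln s + ln (\<psi> s) - k * ln s) has_real_derivative D) (at r) \<and> D \<le> 0"
      using xy slope[OF r]
      by (intro exI[of _ "(real d - r * \<Lambda>' r - k) / r"] conjI log_weighted_density_has_derivative deriv)
        (auto simp: divide_nonpos_pos)
  qed
  then show ?thesis
    using xy pos by (simp add: exp_log_weighted_density[symmetric])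
qed

section \<open>Concentration in fixed dimension\<close>

lemma one_minus_ratio_le:
  fixes t\<^sub>0 t\<^sub>1 t t\<^sub>2 w \<alpha> \<beta> :: real
  assumes "0 \<le> t\<^sub>0" "0 \<le> t\<^sub>1" "0 \<le> t\<^sub>2" "0 < t" "0 < w" "w \<le> t\<^sub>0 + t\<^sub>1 + t + t\<^sub>2"
    and "t\<^sub>1 \<le> \<alpha> * t" "t\<^sub>2 \<le> \<beta> * t"
  shows "1 - t / (t\<^sub>0 + t\<^sub>1 + t + t\<^sub>2) \<le> t\<^sub>0 / w + \<alpha> + \<beta>"
proof -
  let ?T = "t\<^sub>0 + t\<^sub>1 + t + t\<^sub>2"
  have "0 < ?T"
    using assms by linarith
  then have "1 - t / ?T = (t\<^sub>0 + t\<^sub>1 + t\<^sub>2) / ?T"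
    by (simp add: field_simps)
  also have "\<dots> = t\<^sub>0 / ?T + t\<^sub>1 / ?T + t\<^sub>2 / ?T"
    by (simp add: add_divide_distrib)
  also have "\<dots> \<le> t\<^sub>0 / w + t\<^sub>1 / t + t\<^sub>2 / t"
    using assms by (intro add_mono frac_le) auto
  also have "\<dots> \<le> t\<^sub>0 / w + \<alpha> + \<beta>"
    using assms by (intro add_mono order_refl) (simp_all add: pos_divide_le_eq)
  finally show ?thesis .
qed

text \<open>\<open>u\<^sub>0\<close> plays the role of \<open>u\<^sub>\<ddagger>\<close>, and \<open>t * \<Lambda>' t\<close> is the function \<open>L\<close> of the paper.\<close>
locale regular_profile = radial_profile +
  fixes \<Lambda>' :: "real \<Rightarrow> real" and u\<^sub>0 :: real
  assumes moment_finite: "1 \<le> d \<Longrightarrow> radial_moment \<psi> d UNIV < \<infinity>"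
    and threshold_nonneg: "0 \<le> u\<^sub>0"
    and profile_pos: "u\<^sub>0 < t \<Longrightarrow> 0 < \<psi> t"
    and log_profile_deriv: "u\<^sub>0 < t \<Longrightarrow> ((\<lambda>s. - ln (\<psi> s)) has_real_derivative \<Lambda>' t) (at t)"
    and decay_rate_mono: "u\<^sub>0 \<le> s \<Longrightarrow> s \<le> t \<Longrightarrow> s * \<Lambda>' s \<le> t * \<Lambda>' t"
begin

lemma radial_moment_finite: "1 \<le> d \<Longrightarrow> radial_moment \<psi> d S < \<top>"
  using radial_moment_mono[of S UNIV d] moment_finite[of d] by (simp add: order.strict_trans1)

lemma radial_moment_interval_pos:
  assumes "1 \<le> d" "u\<^sub>0 \<le> x" "x < y"
  shows "0 < enn2real (radial_moment \<psi> d {x..y})"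
proof -
  have "radial_moment \<psi> d {x..y} \<noteq> 0"
  proof
    assume "radial_moment \<psi> d {x..y} = 0"
    then have "AE r in lborel. ennreal (r ^ d * \<psi> r) * indicator {x..y} r = 0"
      unfolding radial_moment_def by (subst (asm) nn_integral_0_iff_AE) auto
    then have "AE r in lborel. r \<in> {x} \<or> r \<notin> {x..y}"
    proof (rule AE_mp, intro AE_I2 impI)
      fix r :: real
      assume "ennreal (r ^ d * \<psi> r) * indicator {x..y} r = 0"
      moreover have "0 < r ^ d * \<psi> r" if "x < r"
        using that assms threshold_nonneg profile_pos[of r] by (intro mult_pos_pos zero_less_power) auto
      ultimately show "r \<in> {x} \<or> r \<notin> {x..y}"
        using assms threshold_nonneg by (cases "x < r") (auto split: split_indicator)
    qed
    then have "AE r in lborel. r \<notin> {x..y}"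
      using AE_lborel_singleton[of x] by eventually_elim auto
    then have "emeasure lborel {x..y} = 0"
      by (subst (asm) AE_iff_measurable[where N="{x..y}"]) auto
    then show False
      using assms by simp
  qed
  then show ?thesis
    using radial_moment_finite[OF assms(1)] by (simp add: enn2real_positive_iff less_top zero_less_iff_neq_zero)
qed

lemma radial_moment_ratio_mono:
  assumes "1 \<le> d" "S \<subseteq> T"
  shows "enn2real (radial_moment \<psi> d S) / enn2real (radial_moment \<psi> d UNIV)
           \<le> enn2real (radial_moment \<psi> d T) / enn2real (radial_moment \<psi> d UNIV)"
  using assms radial_moment_finite[OF assms(1)]
  by (intro divide_right_mono enn2real_mono radial_moment_mono) auto

lemma radial_moment_ratio_le_1:
  assumes "1 \<le> d"
  shows "enn2real (radial_moment \<psi> d S) / enn2real (radial_moment \<psi> d UNIV) \<le> 1"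
  using radial_moment_ratio_mono[OF assms, of S UNIV] by (simp add: divide_self_if split: if_splits)

lemma radial_density_growth_below:
  assumes "u\<^sub>0 < r" "r \<le> a"
  shows "r ^ d * \<psi> r \<le> a ^ d * \<psi> a * r powr (real d - a * \<Lambda>' a) / a powr (real d - a * \<Lambda>' a)"
proof -
  have "0 < r"
    using assms threshold_nonneg by linarith
  have "r ^ d * \<psi> r / r powr (real d - a * \<Lambda>' a) \<le> a ^ d * \<psi> a / a powr (real d - a * \<Lambda>' a)"
  proof (rule weighted_density_mono[where \<Lambda>'=\<Lambda>'])
    fix s assume "r \<le> s" "s \<le> a"
    then show "s * \<Lambda>' s + (real d - a * \<Lambda>' a) \<le> real d"
      using decay_rate_mono[of s a] assms by simp
  qed (use assms \<open>0 < r\<close> in \<open>auto intro: profile_pos log_profile_deriv\<close>)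
  with \<open>0 < r\<close> show ?thesis
    by (simp add: divide_le_eq)
qed

lemma radial_density_decay_above:
  assumes "u\<^sub>0 < b" "b \<le> r"
  shows "r ^ d * \<psi> r \<le> b ^ d * \<psi> b * b powr (b * \<Lambda>' b - real d) / r powr (b * \<Lambda>' b - real d)"
proof -
  define k where "k = b * \<Lambda>' b - real d"
  have "0 < b"
    using assms threshold_nonneg by linarith
  have "r ^ d * \<psi> r / r powr (- k) \<le> b ^ d * \<psi> b / b powr (- k)"
  proof (rule weighted_density_antimono[where \<Lambda>'=\<Lambda>'])
    fix s assume "b \<le> s" "s \<le> r"
    then show "real d \<le> s * \<Lambda>' s + - k"
      using decay_rate_mono[of b s] assms by (simp add: k_def)
  qed (use assms \<open>0 < b\<close> in \<open>auto intro: profile_pos log_profile_deriv\<close>)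
  then have "r ^ d * \<psi> r * r powr k \<le> b ^ d * \<psi> b * b powr k"
    by (simp add: powr_minus divide_inverse)
  with \<open>0 < b\<close> assms show ?thesis
    by (simp add: k_def[symmetric] pos_le_divide_eq)
qed

lemma radial_density_mono_below_mode:
  assumes "u\<^sub>0 < a" "a \<le> r" "r \<le> u" "u * \<Lambda>' u = real d"
  shows "a ^ d * \<psi> a \<le> r ^ d * \<psi> r"
proof -
  have "0 < a"
    using assms threshold_nonneg by linarith
  have "a ^ d * \<psi> a / a powr 0 \<le> r ^ d * \<psi> r / r powr 0"
  proof (rule weighted_density_mono[where \<Lambda>'=\<Lambda>'])
    fix s assume "a \<le> s" "s \<le> r"
    then show "s * \<Lambda>' s + 0 \<le> real d"
      using decay_rate_mono[of s u] assms by simp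
  qed (use assms \<open>0 < a\<close> in \<open>auto intro: profile_pos log_profile_deriv\<close>)
  with \<open>0 < a\<close> assms show ?thesis
    by simp
qed

lemma radial_density_antimono_above_mode:
  assumes "u\<^sub>0 < u" "u \<le> r" "r \<le> b" "u * \<Lambda>' u = real d"
  shows "b ^ d * \<psi> b \<le> r ^ d * \<psi> r"
proof -
  have "0 < r"
    using assms threshold_nonneg by linarith
  have "b ^ d * \<psi> b / b powr 0 \<le> r ^ d * \<psi> r / r powr 0"
  proof (rule weighted_density_antimono[where \<Lambda>'=\<Lambda>'])
    fix s assume "r \<le> s" "s \<le> b"
    then show "real d \<le> s * \<Lambda>' s + 0"
      using decay_rate_mono[of u s] assms by simp
  qed (use assms \<open>0 < r\<close> in \<open>auto intro: profile_pos log_profile_deriv\<close>)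
  with \<open>0 < r\<close> assms show ?thesis
    by simp
qed

text \<open>The mass just inside \<open>[(1 - \<delta>) u, u]\<close> is at least the density at \<open>(1 - \<delta>) u\<close> times \<open>\<delta> u\<close>,
  while below \<open>(1 - \<delta>) u\<close> the density decays like a power of exponent \<open>\<kappa>\<close>.\<close>
lemma left_tail_le:
  assumes d: "1 \<le> d" and v: "u\<^sub>0 < v" "v \<le> (1 - \<delta>) * u" and \<delta>: "0 < \<delta>" "\<delta> < 1"
    and u: "u * \<Lambda>' u = real d"
    and \<kappa>: "0 < \<kappa>" "\<kappa> \<le> real d - ((1 - \<delta>) * u) * \<Lambda>' ((1 - \<delta>) * u)"
  shows "enn2real (radial_moment \<psi> d {v..<(1 - \<delta>) * u})
           \<le> 1 / (\<kappa> * \<delta>) * enn2real (radial_moment \<psi> d {(1 - \<delta>) * u..(1 + \<delta>) * u})"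
proof -
  define a where "a = (1 - \<delta>) * u"
  define k where "k = real d - a * \<Lambda>' a"
  define F where "F r = r ^ d * \<psi> r" for r
  have v0: "0 < v" and "0 < (1 - \<delta>) * u"
    using v threshold_nonneg by linarith+
  then have u0: "0 < u"
    using \<delta> by (auto simp: zero_less_mult_iff)
  have a: "0 < a" "a < u" "u \<le> (1 + \<delta>) * u"
    using v v0 u0 \<delta> by (auto simp: a_def algebra_simps)
  have k: "\<kappa> \<le> k" "0 < k"
    using \<kappa> by (simp_all add: k_def a_def)
  have Fa: "0 < F a"
    using a v by (simp add: F_def a_def profile_pos)
  have "ennreal (F a * (u - a)) \<le> radial_moment \<psi> d {a..(1 + \<delta>) * u}"
    unfolding radial_moment_def F_def[symmetric] using a v u Fa radial_density_mono_below_mode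
    by (intro nn_integral_ge_const_interval) (auto simp: F_def a_def)
  then have centre: "F a * (u - a) \<le> enn2real (radial_moment \<psi> d {a..(1 + \<delta>) * u})"
    using enn2real_mono[OF _ radial_moment_finite[OF d]] Fa a by fastforce
  have "radial_moment \<psi> d {v..<a} \<le> ennreal (F a * a / k)"
    unfolding radial_moment_def F_def[symmetric] using v v0 \<kappa> k Fa radial_density_growth_below
    by (intro nn_integral_powr_growth_le) (auto simp: a_def k_def F_def)
  then have "enn2real (radial_moment \<psi> d {v..<a}) \<le> F a * a / k"
    using Fa a \<kappa> k by (intro enn2real_leI) auto
  also have "\<dots> = (1 - \<delta>) / (k * \<delta>) * (F a * (u - a))"
    using u0 \<delta> k by (simp add: a_def field_simps)
  also have "\<dots> \<le> 1 / (\<kappa> * \<delta>) * (F a * (u - a))"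
    using \<kappa> k \<delta> Fa a by (intro mult_right_mono frac_le) auto
  also have "\<dots> \<le> 1 / (\<kappa> * \<delta>) * enn2real (radial_moment \<psi> d {a..(1 + \<delta>) * u})"
    using centre \<kappa> \<delta> by (intro mult_left_mono) auto
  finally show ?thesis
    by (simp add: a_def)
qed

lemma right_tail_le:
  assumes d: "1 \<le> d" and a: "u\<^sub>0 < (1 - \<delta>) * u" and \<delta>: "0 < \<delta>" "\<delta> \<le> 1"
    and u: "u * \<Lambda>' u = real d"
    and \<kappa>: "2 \<le> \<kappa>" "\<kappa> \<le> ((1 + \<delta>) * u) * \<Lambda>' ((1 + \<delta>) * u) - real d"
  shows "enn2real (radial_moment \<psi> d {(1 + \<delta>) * u<..})
           \<le> 4 / (\<kappa> * \<delta>) * enn2real (radial_moment \<psi> d {(1 - \<delta>) * u..(1 + \<delta>) * u})"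
proof -
  define b where "b = (1 + \<delta>) * u"
  define k where "k = b * \<Lambda>' b - real d"
  define F where "F r = r ^ d * \<psi> r" for r
  have "0 < (1 - \<delta>) * u"
    using a threshold_nonneg by linarith
  then have u0: "0 < u"
    using \<delta> by (auto simp: zero_less_mult_iff)
  have "0 < \<delta> * u"
    using \<delta> u0 by simp
  then have b: "0 < b" "u < b" "(1 - \<delta>) * u \<le> u" "u\<^sub>0 < u"
    using a u0 unfolding b_def by (simp_all add: algebra_simps)
  have k: "\<kappa> \<le> k"
    using \<kappa> by (simp add: k_def b_def)
  have Fb: "0 < F b"
    using a b by (simp add: F_def profile_pos)
  have "ennreal (F b * (b - u)) \<le> radial_moment \<psi> d {(1 - \<delta>) * u..b}"
    unfolding radial_moment_def F_def[symmetric] using b u Fb radial_density_antimono_above_mode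
    by (intro nn_integral_ge_const_interval) (auto simp: F_def)
  then have centre: "F b * (b - u) \<le> enn2real (radial_moment \<psi> d {(1 - \<delta>) * u..b})"
    using enn2real_mono[OF _ radial_moment_finite[OF d]] Fb b by fastforce
  have "radial_moment \<psi> d {b<..} \<le> ennreal (F b * b / (k - 1))"
    unfolding radial_moment_def F_def[symmetric] using b \<kappa> k Fb radial_density_decay_above
    by (intro nn_integral_powr_decay_le) (auto simp: k_def F_def)
  then have "enn2real (radial_moment \<psi> d {b<..}) \<le> F b * b / (k - 1)"
    using Fb b \<kappa> k by (intro enn2real_leI) auto
  also have "\<dots> = (1 + \<delta>) / ((k - 1) * \<delta>) * (F b * (b - u))"
    using u0 \<kappa> k \<delta> by (simp add: b_def field_simps)
  also have "\<dots> \<le> 4 / (\<kappa> * \<delta>) * (F b * (b - u))"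
  proof (rule mult_right_mono)
    have "(1 + \<delta>) / ((k - 1) * \<delta>) \<le> 2 / (\<kappa> / 2 * \<delta>)"
      using \<kappa> k \<delta> by (intro frac_le mult_right_mono) auto
    then show "(1 + \<delta>) / ((k - 1) * \<delta>) \<le> 4 / (\<kappa> * \<delta>)"
      by simp
  qed (use Fb b in simp)
  also have "\<dots> \<le> 4 / (\<kappa> * \<delta>) * enn2real (radial_moment \<psi> d {(1 - \<delta>) * u..b})"
    using centre \<kappa> \<delta> by (intro mult_left_mono) auto
  finally show ?thesis
    by (simp add: b_def)
qed

lemma radial_moment_below_le:
  assumes "1 \<le> d" "0 < v"
  shows "enn2real (radial_moment \<psi> d {..<v}) \<le> v ^ (d - 1) * enn2real (radial_moment \<psi> 1 UNIV)"
proof -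
  have "radial_moment \<psi> d {..<v} \<le> ennreal (v ^ (d - 1)) * radial_moment \<psi> 1 {..<v}"
    using assms by (intro radial_moment_le_first_moment) auto
  also have "\<dots> \<le> ennreal (v ^ (d - 1)) * radial_moment \<psi> 1 UNIV"
    by (intro mult_left_mono radial_moment_mono) auto
  also have "\<dots> = ennreal (v ^ (d - 1) * enn2real (radial_moment \<psi> 1 UNIV))"
    using radial_moment_finite[OF order_refl, of UNIV] assms by (simp add: ennreal_mult less_top)
  finally show ?thesis
    using assms by (intro enn2real_leI) auto
qed

lemma radial_moment_ge_shell:
  assumes "1 \<le> d" "0 \<le> w"
  shows "w ^ (d - 1) * enn2real (radial_moment \<psi> 1 {w..w'}) \<le> enn2real (radial_moment \<psi> d UNIV)"
proof -
  have "ennreal (w ^ (d - 1) * enn2real (radial_moment \<psi> 1 {w..w'})) \<le> radial_moment \<psi> d {w..w'}"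
    using radial_moment_ge_first_moment[of d w "{w..w'}"] radial_moment_finite[OF order_refl] assms
    by (simp add: ennreal_mult less_top)
  also have "\<dots> \<le> radial_moment \<psi> d UNIV"
    by (rule radial_moment_mono) simp
  finally show ?thesis
    using enn2real_mono[OF _ radial_moment_finite[OF assms(1)]] assms by fastforce
qed

lemma enn2real_radial_moment_split4:
  assumes "1 \<le> d" "v \<le> a" "a \<le> b"
  shows "enn2real (radial_moment \<psi> d UNIV)
           = enn2real (radial_moment \<psi> d {..<v}) + enn2real (radial_moment \<psi> d {v..<a})
             + enn2real (radial_moment \<psi> d {a..b}) + enn2real (radial_moment \<psi> d {b<..})"
  using radial_moment_split4[OF assms(2,3), of d] radial_moment_finite[OF assms(1)]
  by (simp add: enn2real_plus less_top)

lemma concentration_bound: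
  assumes d: "1 \<le> d" and v: "u\<^sub>0 < v" "2 * v < u" and u: "u * \<Lambda>' u = real d"
    and \<delta>: "0 < \<delta>" "\<delta> \<le> 1 / 2" and \<nu>: "4 \<le> \<delta>\<^sup>2 * \<nu>"
    and left_gap: "\<delta> * \<nu> / 2 \<le> real d - ((1 - \<delta>) * u) * \<Lambda>' ((1 - \<delta>) * u)"
    and right_gap: "\<delta> * \<nu> / 2 \<le> ((1 + \<delta>) * u) * \<Lambda>' ((1 + \<delta>) * u) - real d"
  shows "1 - enn2real (radial_moment \<psi> d {(1 - \<delta>) * u..(1 + \<delta>) * u}) / enn2real (radial_moment \<psi> d UNIV)
           \<le> enn2real (radial_moment \<psi> 1 UNIV) / (2 ^ (d - 1) * enn2real (radial_moment \<psi> 1 {2 * v..3 * v}))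
             + 10 / (\<delta>\<^sup>2 * \<nu>)"
proof -
  define J where "J S = enn2real (radial_moment \<psi> d S)" for S
  define m where "m = enn2real (radial_moment \<psi> 1 UNIV)"
  define c where "c = enn2real (radial_moment \<psi> 1 {2 * v..3 * v})"
  have v0: "0 < v"
    using v threshold_nonneg by linarith
  have "u / 2 \<le> (1 - \<delta>) * u"
    using v0 v \<delta> mult_right_mono[of "1/2" "1 - \<delta>" u] by simp
  then have order: "v < (1 - \<delta>) * u" "(1 - \<delta>) * u < (1 + \<delta>) * u"
    using v0 v \<delta> by (auto simp: algebra_simps)
  have "0 < \<delta> * (\<delta> * \<nu>)"
    using \<nu> by (simp add: power2_eq_square)
  then have "0 < \<delta> * \<nu>"
    using \<delta> zero_less_mult_pos by blast
  then have \<delta>\<nu>: "0 < \<delta>\<^sup>2 * \<nu>" "\<delta>\<^sup>2 * \<nu> \<le> \<delta> * \<nu> / 2"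
    using \<delta> mult_right_mono[of \<delta> "1/2" "\<delta> * \<nu>"] by (auto simp: power2_eq_square)
  have c: "0 < c"
    unfolding c_def using v0 v by (intro radial_moment_interval_pos) auto
  have bulk: "0 < J {(1 - \<delta>) * u..(1 + \<delta>) * u}"
    unfolding J_def using d order v by (intro radial_moment_interval_pos) auto
  have left: "J {v..<(1 - \<delta>) * u} \<le> 2 / (\<delta>\<^sup>2 * \<nu>) * J {(1 - \<delta>) * u..(1 + \<delta>) * u}"
    using left_tail_le[OF d v(1) _ \<delta>(1) _ u _ left_gap] order \<delta> \<delta>\<nu>
    by (simp add: J_def power2_eq_square mult_ac)
  have right: "J {(1 + \<delta>) * u<..} \<le> 8 / (\<delta>\<^sup>2 * \<nu>) * J {(1 - \<delta>) * u..(1 + \<delta>) * u}"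
    using right_tail_le[OF d _ \<delta>(1) _ u _ right_gap] order v \<delta> \<delta>\<nu> \<nu>
    by (simp add: J_def power2_eq_square mult_ac)
  have split: "J UNIV = J {..<v} + J {v..<(1 - \<delta>) * u} + J {(1 - \<delta>) * u..(1 + \<delta>) * u} + J {(1 + \<delta>) * u<..}"
    unfolding J_def using order by (intro enn2real_radial_moment_split4 d) auto
  have "(2 * v) ^ (d - 1) * c \<le> J UNIV"
    unfolding J_def c_def using d v0 by (intro radial_moment_ge_shell) auto
  then have "1 - J {(1 - \<delta>) * u..(1 + \<delta>) * u} / J UNIV
      \<le> J {..<v} / ((2 * v) ^ (d - 1) * c) + 2 / (\<delta>\<^sup>2 * \<nu>) + 8 / (\<delta>\<^sup>2 * \<nu>)"
    unfolding split using c v0 bulk left right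
    by (intro one_minus_ratio_le) (auto simp: J_def)
  also have "J {..<v} / ((2 * v) ^ (d - 1) * c) \<le> m / (2 ^ (d - 1) * c)"
    using radial_moment_below_le[OF d v0] v0 c
    by (simp add: J_def m_def power_mult_distrib divide_simps) (simp add: mult.commute)
  finally show ?thesis
    by (simp add: J_def m_def c_def add_divide_distrib[symmetric] mult.commute)
qed

end

section \<open>Letting the dimension grow\<close>

lemma level_points_tendsto_at_top:
  fixes L :: "real \<Rightarrow> real" and u :: "nat \<Rightarrow> real"
  assumes mono: "\<And>s t. a \<le> s \<Longrightarrow> s \<le> t \<Longrightarrow> L s \<le> L t"
    and u: "\<forall>\<^sub>F d in sequentially. a \<le> u d \<and> L (u d) = real d"
  shows "filterlim u at_top sequentially"
  unfolding filterlim_at_top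
proof
  fix R :: real
  have "\<forall>\<^sub>F d in sequentially. L (max R a) < real d"
    using filterlim_real_sequentially by (simp add: filterlim_at_top_dense)
  with u show "\<forall>\<^sub>F d in sequentially. R \<le> u d"
  proof eventually_elim
    case (elim d)
    show ?case
    proof (rule ccontr)
      assume "\<not> R \<le> u d"
      then have "L (u d) \<le> L (max R a)"
        using elim by (intro mono) auto
      with elim show False
        by simp
    qed
  qed
qed

lemma linearisation_gaps:
  fixes L :: "real \<Rightarrow> real"
  assumes lin: "\<And>e. e\<^sup>2 \<le> \<omega> / \<nu> \<Longrightarrow> \<bar>L u - L ((1 - e) * u) - e * \<nu>\<bar> \<le> \<bar>e\<bar> * \<nu> / \<omega>"
    and \<omega>: "2 \<le> \<omega>" and \<nu>: "0 < \<nu>" and \<delta>: "0 < \<delta>" "\<delta>\<^sup>2 \<le> \<omega> / \<nu>"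
  shows "\<delta> * \<nu> / 2 \<le> L u - L ((1 - \<delta>) * u)" and "\<delta> * \<nu> / 2 \<le> L ((1 + \<delta>) * u) - L u"
proof -
  have error: "\<delta> * \<nu> / \<omega> \<le> \<delta> * \<nu> / 2"
    using \<omega> \<nu> \<delta> by (intro divide_left_mono) auto
  have "\<bar>L u - L ((1 - \<delta>) * u) - \<delta> * \<nu>\<bar> \<le> \<delta> * \<nu> / \<omega>"
    using lin[of \<delta>] \<delta> by simp
  with error show "\<delta> * \<nu> / 2 \<le> L u - L ((1 - \<delta>) * u)"
    by linarith
  have "\<bar>L u - L ((1 + \<delta>) * u) + \<delta> * \<nu>\<bar> \<le> \<delta> * \<nu> / \<omega>"
    using lin[of "- \<delta>"] \<delta> by simp
  with error show "\<delta> * \<nu> / 2 \<le> L ((1 + \<delta>) * u) - L u"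
    by linarith
qed

definition truncated_scale :: "real \<Rightarrow> real \<Rightarrow> real \<Rightarrow> real" where
  "truncated_scale \<epsilon> \<omega> \<nu> = min \<epsilon> (min (sqrt (\<omega> / \<nu>)) (1 / 2))"

lemma truncated_scale_bounds:
  assumes "0 < \<epsilon>" "0 < \<omega>" "0 < \<nu>"
  shows "0 < truncated_scale \<epsilon> \<omega> \<nu>" "truncated_scale \<epsilon> \<omega> \<nu> \<le> 1 / 2"
    "truncated_scale \<epsilon> \<omega> \<nu> \<le> \<epsilon>" "(truncated_scale \<epsilon> \<omega> \<nu>)\<^sup>2 \<le> \<omega> / \<nu>"
proof -
  show pos: "0 < truncated_scale \<epsilon> \<omega> \<nu>" and "truncated_scale \<epsilon> \<omega> \<nu> \<le> 1 / 2"
    and "truncated_scale \<epsilon> \<omega> \<nu> \<le> \<epsilon>"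
    using assms by (simp_all add: truncated_scale_def)
  have "(truncated_scale \<epsilon> \<omega> \<nu>)\<^sup>2 \<le> (sqrt (\<omega> / \<nu>))\<^sup>2"
    using pos by (intro power_mono) (simp_all add: truncated_scale_def)
  with assms show "(truncated_scale \<epsilon> \<omega> \<nu>)\<^sup>2 \<le> \<omega> / \<nu>"
    by simp
qed

lemma truncated_scale_sq_tendsto:
  fixes \<epsilon> \<nu> \<omega> :: "nat \<Rightarrow> real"
  assumes \<epsilon>: "filterlim (\<lambda>d. \<epsilon> d * sqrt (\<nu> d)) at_top sequentially"
    and \<omega>: "filterlim \<omega> at_top sequentially" and \<nu>: "filterlim \<nu> at_top sequentially"
  shows "filterlim (\<lambda>d. (truncated_scale (\<epsilon> d) (\<omega> d) (\<nu> d))\<^sup>2 * \<nu> d) at_top sequentially"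
  unfolding filterlim_at_top
proof
  fix B :: real
  have "\<forall>\<^sub>F d in sequentially. sqrt (max B 0) \<le> \<epsilon> d * sqrt (\<nu> d)"
    using \<epsilon> unfolding filterlim_at_top by blast
  moreover have "\<forall>\<^sub>F d in sequentially. max B 0 \<le> \<omega> d"
    using \<omega> unfolding filterlim_at_top by blast
  moreover have "\<forall>\<^sub>F d in sequentially. 4 * max B 0 + 1 \<le> \<nu> d"
    using \<nu> unfolding filterlim_at_top by blast
  ultimately show "\<forall>\<^sub>F d in sequentially. B \<le> (truncated_scale (\<epsilon> d) (\<omega> d) (\<nu> d))\<^sup>2 * \<nu> d"
  proof eventually_elim
    case (elim d)
    then have \<nu>_pos: "0 < \<nu> d"
      by linarith
    consider "truncated_scale (\<epsilon> d) (\<omega> d) (\<nu> d) = \<epsilon> d"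
      | "truncated_scale (\<epsilon> d) (\<omega> d) (\<nu> d) = sqrt (\<omega> d / \<nu> d)"
      | "truncated_scale (\<epsilon> d) (\<omega> d) (\<nu> d) = 1 / 2"
      unfolding truncated_scale_def by linarith
    then show ?case
    proof cases
      case 1
      have "(sqrt (max B 0))\<^sup>2 \<le> (\<epsilon> d * sqrt (\<nu> d))\<^sup>2"
        using elim(1) by (intro power_mono) auto
      then have "max B 0 \<le> (\<epsilon> d * sqrt (\<nu> d))\<^sup>2"
        by simp
      with 1 \<nu>_pos show ?thesis
        by (simp add: power_mult_distrib)
    next
      case 2
      with elim \<nu>_pos show ?thesis
        by simp
    next
      case 3
      from elim show ?thesis
        unfolding 3 by (simp add: power2_eq_square)
    qed
  qed
qed

context regular_profile
begin

lemma concentration_bound_linearised: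
  assumes d: "1 \<le> d" and v: "u\<^sub>0 < v" "2 * v < u" and u: "u * \<Lambda>' u = real d"
    and lin: "\<And>e. e\<^sup>2 \<le> \<omega> / \<nu> \<Longrightarrow>
                \<bar>u * \<Lambda>' u - ((1 - e) * u) * \<Lambda>' ((1 - e) * u) - e * \<nu>\<bar> \<le> \<bar>e\<bar> * \<nu> / \<omega>"
    and \<omega>: "2 \<le> \<omega>" and \<nu>: "0 < \<nu>" and \<epsilon>: "0 < \<epsilon>"
    and \<delta>\<nu>: "4 \<le> (truncated_scale \<epsilon> \<omega> \<nu>)\<^sup>2 * \<nu>"
  shows "1 - enn2real (radial_moment \<psi> d {(1 - \<epsilon>) * u..(1 + \<epsilon>) * u}) / enn2real (radial_moment \<psi> d UNIV)
           \<le> enn2real (radial_moment \<psi> 1 UNIV) / (2 ^ (d - 1) * enn2real (radial_moment \<psi> 1 {2 * v..3 * v}))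
             + 10 / ((truncated_scale \<epsilon> \<omega> \<nu>)\<^sup>2 * \<nu>)"
proof -
  let ?\<delta> = "truncated_scale \<epsilon> \<omega> \<nu>"
  have "0 < \<omega>"
    using \<omega> by linarith
  note \<delta> = truncated_scale_bounds[OF \<epsilon> this \<nu>]
  note gaps = linearisation_gaps[where L="\<lambda>t. t * \<Lambda>' t", OF lin \<omega> \<nu> \<delta>(1) \<delta>(4)]
  have "enn2real (radial_moment \<psi> d {(1 - ?\<delta>) * u..(1 + ?\<delta>) * u}) / enn2real (radial_moment \<psi> d UNIV)
      \<le> enn2real (radial_moment \<psi> d {(1 - \<epsilon>) * u..(1 + \<epsilon>) * u}) / enn2real (radial_moment \<psi> d UNIV)"
    using \<delta> \<omega> v threshold_nonneg by (intro radial_moment_ratio_mono d) (auto intro!: mult_right_mono)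
  moreover have "1 - enn2real (radial_moment \<psi> d {(1 - ?\<delta>) * u..(1 + ?\<delta>) * u}) / enn2real (radial_moment \<psi> d UNIV)
      \<le> enn2real (radial_moment \<psi> 1 UNIV) / (2 ^ (d - 1) * enn2real (radial_moment \<psi> 1 {2 * v..3 * v}))
        + 10 / (?\<delta>\<^sup>2 * \<nu>)"
    using gaps \<omega> u \<delta>\<nu> \<delta> by (intro concentration_bound[OF d v u]) auto
  ultimately show ?thesis
    by linarith
qed

lemma concentration_tendsto:
  fixes u \<nu> \<omega> \<epsilon> :: "nat \<Rightarrow> real"
  assumes u: "filterlim u at_top sequentially" "\<forall>\<^sub>F d in sequentially. u d * \<Lambda>' (u d) = real d"
    and \<nu>: "filterlim \<nu> at_top sequentially" and \<omega>: "filterlim \<omega> at_top sequentially"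
    and lin: "\<forall>\<^sub>F d in sequentially. \<forall>e. e\<^sup>2 \<le> \<omega> d / \<nu> d \<longrightarrow>
                \<bar>u d * \<Lambda>' (u d) - ((1 - e) * u d) * \<Lambda>' ((1 - e) * u d) - e * \<nu> d\<bar> \<le> \<bar>e\<bar> * \<nu> d / \<omega> d"
    and \<epsilon>: "\<And>d. 0 < \<epsilon> d" "filterlim (\<lambda>d. \<epsilon> d * sqrt (\<nu> d)) at_top sequentially"
  shows "(\<lambda>d. enn2real (radial_moment \<psi> d {(1 - \<epsilon> d) * u d..(1 + \<epsilon> d) * u d})
              / enn2real (radial_moment \<psi> d UNIV)) \<longlonglongrightarrow> 1"
    (is "?P \<longlonglongrightarrow> 1")
proof -
  define v where "v = u\<^sub>0 + 1"
  define m where "m = enn2real (radial_moment \<psi> 1 UNIV)"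
  define c where "c = enn2real (radial_moment \<psi> 1 {2 * v..3 * v})"
  define \<rho> where "\<rho> d = (truncated_scale (\<epsilon> d) (\<omega> d) (\<nu> d))\<^sup>2 * \<nu> d" for d
  define \<eta> where "\<eta> = (\<lambda>d. m / c * (1 / 2) ^ (d - 1) + 10 / \<rho> d)"
  have \<rho>: "filterlim \<rho> at_top sequentially"
    unfolding \<rho>_def using \<epsilon>(2) \<omega> \<nu> by (rule truncated_scale_sq_tendsto)
  have "(\<lambda>d. (1 / 2 :: real) ^ (d - 1)) \<longlonglongrightarrow> 0"
    by (rule LIMSEQ_imp_Suc) (simp add: LIMSEQ_power_zero)
  then have "\<eta> \<longlonglongrightarrow> m / c * 0 + 0"
    unfolding \<eta>_def using \<rho>
    by (intro tendsto_add tendsto_mult tendsto_const tendsto_divide_0[OF tendsto_const]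
        filterlim_at_top_imp_at_infinity)
  from tendsto_diff[OF tendsto_const this] have lower_limit: "(\<lambda>d. 1 - \<eta> d) \<longlonglongrightarrow> 1"
    by simp
  have "\<forall>\<^sub>F d in sequentially. 2 \<le> \<omega> d" "\<forall>\<^sub>F d in sequentially. 1 \<le> \<nu> d"
    "\<forall>\<^sub>F d in sequentially. 2 * v + 1 \<le> u d"
    "\<forall>\<^sub>F d in sequentially. 4 \<le> (truncated_scale (\<epsilon> d) (\<omega> d) (\<nu> d))\<^sup>2 * \<nu> d"
    using \<omega> \<nu> u(1) \<rho> unfolding filterlim_at_top \<rho>_def by blast+
  with eventually_ge_at_top[of 1] u(2) lin have "\<forall>\<^sub>F d in sequentially. 1 - \<eta> d \<le> ?P d"
  proof eventually_elim
    case (elim d)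
    have "1 - ?P d \<le> m / (2 ^ (d - 1) * c) + 10 / \<rho> d"
      unfolding m_def c_def \<rho>_def using elim \<epsilon>(1) threshold_nonneg
      by (intro concentration_bound_linearised) (auto simp: v_def)
    then show ?case
      by (simp add: \<eta>_def power_one_over ac_simps)
  qed
  moreover have "\<forall>\<^sub>F d in sequentially. ?P d \<le> 1"
    using eventually_ge_at_top[of 1] by eventually_elim (rule radial_moment_ratio_le_1)
  ultimately show ?thesis
    by (rule tendsto_sandwich[OF _ _ lower_limit tendsto_const])
qed

end

lemma regular_profile_zero_extension:
  fixes \<psi> \<Lambda>' :: "real \<Rightarrow> real"
  assumes meas: "\<psi> \<in> borel_measurable (restrict_space borel {0..})"
    and nonneg: "\<forall>t\<ge>0. \<psi> t \<ge> 0"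
    and moments: "\<forall>d::nat\<ge>1. (\<integral>\<^sup>+ t\<in>{0..}. ennreal (t ^ d * \<psi> t) \<partial>lborel) < \<infinity>"
    and pos: "\<forall>t\<ge>a. \<psi> t > 0"
    and deriv: "\<forall>t\<ge>a. ((\<lambda>s. - ln (\<psi> s)) has_real_derivative \<Lambda>' t) (at t within {a..})"
    and mono: "strict_mono_on {a..} (\<lambda>t. t * \<Lambda>' t)"
  shows "regular_profile (\<lambda>r. if 0 \<le> r then \<psi> r else 0) \<Lambda>' (max a 0)"
proof unfold_locales
  have "(\<lambda>r. indicator {0..} r *\<^sub>R \<psi> r) \<in> borel_measurable borel"
    using meas by (subst (asm) borel_measurable_restrict_space_iff) auto
  moreover have "(\<lambda>r. indicator {0..} r *\<^sub>R \<psi> r) = (\<lambda>r. if 0 \<le> r then \<psi> r else 0)"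
    by (auto simp: fun_eq_iff)
  ultimately show "(\<lambda>r. if 0 \<le> r then \<psi> r else 0) \<in> borel_measurable borel"
    by simp
  show "radial_moment (\<lambda>r. if 0 \<le> r then \<psi> r else 0) d UNIV < \<infinity>" if "1 \<le> d" for d
  proof -
    have "radial_moment (\<lambda>r. if 0 \<le> r then \<psi> r else 0) d UNIV
        = (\<integral>\<^sup>+ t\<in>{0..}. ennreal (t ^ d * \<psi> t) \<partial>lborel)"
      unfolding radial_moment_def by (intro nn_integral_cong) (auto split: split_indicator)
    with moments that show ?thesis
      by simp
  qed
  fix t
  assume t: "max a 0 < t"
  then have t_ge: "a \<le> t" "0 \<le> t" and "t \<in> interior {a..}"
    by auto
  from this(3) have at_t: "at t within {a..} = at t"
    by (rule at_within_interior)
  show "0 < (if 0 \<le> t then \<psi> t else 0)"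
    using pos t_ge by simp
  have "((\<lambda>s. - ln (\<psi> s)) has_real_derivative \<Lambda>' t) (at t)"
    using deriv[rule_format, OF t_ge(1)] unfolding at_t .
  then show "((\<lambda>s. - ln (if 0 \<le> s then \<psi> s else 0)) has_real_derivative \<Lambda>' t) (at t)"
    by (rule has_field_derivative_transform_within_open[where S="{0<..}"]) (use t in auto)
next
  fix s t
  assume "max a 0 \<le> s" "s \<le> t"
  then show "s * \<Lambda>' s \<le> t * \<Lambda>' t"
    using strict_mono_on_leD[OF mono, of s t] by simp
qed (use nonneg in auto)

theorem proposition1:
  fixes \<psi> :: "real \<Rightarrow> real"
    and c :: "nat \<Rightarrow> real"
    and M :: "nat \<Rightarrow> 'a measure"
    and X :: "nat \<Rightarrow> 'a \<Rightarrow> (nat \<Rightarrow> real)"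
    and u_dd :: real
    and \<Lambda>' :: "real \<Rightarrow> real"
    and L' :: "real \<Rightarrow> real"
    and u :: "nat \<Rightarrow> real"
    and \<epsilon> :: "nat \<Rightarrow> real"
  assumes psi_meas: "\<psi> \<in> borel_measurable (restrict_space borel {0..})"
    and psi_nonneg: "\<forall>t\<ge>0. \<psi> t \<ge> 0"
    and moments: "\<forall>d::nat\<ge>1. 0 < (\<integral>\<^sup>+ t\<in>{0..}. ennreal (t ^ d * \<psi> t) \<partial>lborel)
                      \<and> (\<integral>\<^sup>+ t\<in>{0..}. ennreal (t ^ d * \<psi> t) \<partial>lborel) < \<infinity>"
    and not_compact_supp: "\<forall>R. \<exists>t\<ge>R. \<psi> t \<noteq> 0"
    and prob: "\<forall>d\<ge>1. prob_space (M d)"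
    and dens: "\<forall>d\<ge>1. distributed (M d) (lebesgue_R d) (X d)
                        (\<lambda>x. ennreal (c d * \<psi> (enorm d x)))"
    and psi_pos: "\<forall>t\<ge>u_dd. \<psi> t > 0"
    and Lambda_deriv: "\<forall>t\<ge>u_dd. ((\<lambda>s. - ln (\<psi> s)) has_real_derivative \<Lambda>' t) (at t within {u_dd..})"
    and L_incr: "strict_mono_on {u_dd..} (\<lambda>t. t * \<Lambda>' t)"
    and M_infty: "filterlim (\<lambda>t. (t * \<Lambda>' t) / ln t) at_top at_top"
    and M_lower: "\<forall>e. 0 < e \<and> e < 1 \<longrightarrow>
        Limsup at_top (\<lambda>t. ereal ((((1 - e) * t) * \<Lambda>' ((1 - e) * t) / ln ((1 - e) * t))
                                   / ((t * \<Lambda>' t) / ln t))) \<le> 1"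
    and M_upper: "\<forall>e. 0 < e \<and> e < 1 \<longrightarrow>
        Liminf at_top (\<lambda>t. ereal ((((1 + e) * t) * \<Lambda>' ((1 + e) * t) / ln ((1 + e) * t))
                                   / ((t * \<Lambda>' t) / ln t))) \<ge> 1"
    and u_def: "\<forall>\<^sub>F d in sequentially. u d \<ge> u_dd \<and> u d * \<Lambda>' (u d) = real d"
    and L_deriv: "\<forall>t\<ge>u_dd. ((\<lambda>s. s * \<Lambda>' s) has_real_derivative L' t) (at t within {u_dd..})"
    and nu_infty: "filterlim (\<lambda>d. u d * L' (u d)) at_top sequentially"
    and omega: "\<exists>\<omega> :: nat \<Rightarrow> real. filterlim \<omega> at_top sequentially \<and>
        (\<forall>\<^sub>F d in sequentially. \<forall>e::real.
            e\<^sup>2 \<le> \<omega> d / (u d * L' (u d)) \<longrightarrow>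
            \<bar>u d * \<Lambda>' (u d) - ((1 - e) * u d) * \<Lambda>' ((1 - e) * u d) - e * u d * L' (u d)\<bar>
              \<le> \<bar>e\<bar> * (u d * L' (u d)) / \<omega> d)"
    and eps_pos: "\<forall>d. \<epsilon> d > 0"
    and eps_large: "filterlim (\<lambda>d. \<epsilon> d * sqrt (u d * L' (u d))) at_top sequentially"
  shows "(\<lambda>d. measure (M d) {w \<in> space (M d).
            1 - \<epsilon> d \<le> enorm d (X d w) / u d \<and> enorm d (X d w) / u d \<le> 1 + \<epsilon> d})
         \<longlonglongrightarrow> 1"
proof -
  define \<psi>\<^sub>0 where "\<psi>\<^sub>0 = (\<lambda>r. if 0 \<le> r then \<psi> r else 0)"
  interpret regular_profile \<psi>\<^sub>0 \<Lambda>' "max u_dd 0"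
    unfolding \<psi>\<^sub>0_def using psi_meas psi_nonneg moments psi_pos Lambda_deriv L_incr
    by (intro regular_profile_zero_extension) auto
  have L_mono: "s * \<Lambda>' s \<le> t * \<Lambda>' t" if "u_dd \<le> s" "s \<le> t" for s t
    using strict_mono_on_leD[OF L_incr, of s t] that by simp
  have u_lim: "filterlim u at_top sequentially"
    using L_mono u_def by (rule level_points_tendsto_at_top)
  obtain \<omega> where \<omega>: "filterlim \<omega> at_top sequentially"
    and lin: "\<forall>\<^sub>F d in sequentially. \<forall>e::real. e\<^sup>2 \<le> \<omega> d / (u d * L' (u d)) \<longrightarrow>
            \<bar>u d * \<Lambda>' (u d) - ((1 - e) * u d) * \<Lambda>' ((1 - e) * u d) - e * u d * L' (u d)\<bar>
              \<le> \<bar>e\<bar> * (u d * L' (u d)) / \<omega> d"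
    using omega by blast
  have ratio_lim: "(\<lambda>d. enn2real (radial_moment \<psi>\<^sub>0 d {(1 - \<epsilon> d) * u d..(1 + \<epsilon> d) * u d})
      / enn2real (radial_moment \<psi>\<^sub>0 d UNIV)) \<longlonglongrightarrow> 1"
    using u_def lin by (intro concentration_tendsto[OF u_lim _ nu_infty \<omega> _ eps_pos[rule_format] eps_large])
      (auto elim!: eventually_mono simp: mult.assoc)
  have dist: "distributed (M d) (lebesgue_R d) (X d) (\<lambda>x. ennreal (c d * \<psi>\<^sub>0 (enorm d x)))" if "1 \<le> d" for d
    using dens that by (simp add: \<psi>\<^sub>0_def enorm_nonneg)
  have "\<forall>\<^sub>F d in sequentially.
      enn2real (radial_moment \<psi>\<^sub>0 d {(1 - \<epsilon> d) * u d..(1 + \<epsilon> d) * u d}) / enn2real (radial_moment \<psi>\<^sub>0 d UNIV)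
      = measure (M d) {w \<in> space (M d). 1 - \<epsilon> d \<le> enorm d (X d w) / u d \<and> enorm d (X d w) / u d \<le> 1 + \<epsilon> d}"
    using eventually_ge_at_top[of 1] u_lim[unfolded filterlim_at_top_dense, rule_format, of 0]
  proof eventually_elim
    case (elim d)
    then show ?case
      using prob dist[OF elim(1)] measure_relative_norm_deviation[of "M d" d "X d" "c d" "u d"] by simp
  qed
  with ratio_lim show ?thesis
    by (rule Lim_transform_eventually)
qed

end
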